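(* The short exact sequence $1\to\mathrm{Sym}(\{0,1\}^* )\to QT\xrightarrow{\pi} T\to 1$ does not split, i.e. there is no homomorphism $j:T\to QT$ with $\pi\circ j=\mathrm{id}_T$.
   Context: Let $\{0,1\}^*$ be the finite words over $\{0,1\}$, the vertices of the rooted binary tree in which $x$ has children $x0$ and $x1$ (two edge colours). $QV$ is the group of bijections $\tau$ of $\{0,1\}^*$ with $\tau(x0)=\tau(x)0$ and $\tau(x1)=\tau(x)1$ for all but finitely many $x$. Each such $\tau$ induces a homeomorphism $\pi(\tau)$ of $\{0,1\}^{\mathbb N}$ by $\pi(\tau)(\ell\omega)=\tau(\ell)\omega$, for $\ell$ in a finite maximal prefix-antichain $L$ with $\tau(\ell s)=\tau(\ell)s$ for all $\ell\in L$ and words $s$; this gives a surjective homomorphism $\pi:QV\to V$ onto Thompson's group $V$ with kernel $\mathrm{Sym}(\{0,1\}^* )$, the finitely supported permutations of $\{0,1\}^*$. Thompson's group $T\le V$ consists of the elements preserving the cyclic lexicographic order of $\{0,1\}^{\mathbb N}$; $QT=\pi^{-1}(T)$ and $\pi$ also denotes its restriction to $QT$. *)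

theory Defs
  imports Main
begin

text \<open>Finite words over {0,1}: bool list, with 0 = False and 1 = True.
  Cantor space {0,1}^N: nat \<Rightarrow> bool.\<close>

type_synonym word = "bool list"
type_synonym cantor = "nat \<Rightarrow> bool"

definition conc :: "word \<Rightarrow> cantor \<Rightarrow> cantor" where
  "conc l w = (\<lambda>n. if n < length l then l ! n else w (n - length l))"

definition pref :: "nat \<Rightarrow> cantor \<Rightarrow> word" where
  "pref n w = map w [0..<n]"

definition QV :: "(word \<Rightarrow> word) set" where
  "QV = {\<tau>. bij \<tau> \<and>
     finite {x. \<tau> (x @ [False]) \<noteq> \<tau> x @ [False] \<or> \<tau> (x @ [True]) \<noteq> \<tau> x @ [True]}}"

definition pi :: "(word \<Rightarrow> word) \<Rightarrow> cantor \<Rightarrow> cantor" where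
  "pi \<tau> w = (let n = (SOME n. \<forall>s. \<tau> (pref n w @ s) = \<tau> (pref n w) @ s)
              in conc (\<tau> (pref n w)) (\<lambda>k. w (k + n)))"

definition V :: "(cantor \<Rightarrow> cantor) set" where
  "V = pi ` QV"

definition lex_less :: "cantor \<Rightarrow> cantor \<Rightarrow> bool" where
  "lex_less x y = (\<exists>n. (\<forall>k<n. x k = y k) \<and> \<not> x n \<and> y n)"

definition cyc :: "cantor \<Rightarrow> cantor \<Rightarrow> cantor \<Rightarrow> bool" where
  "cyc x y z = ((lex_less x y \<and> lex_less y z) \<or> (lex_less y z \<and> lex_less z x)
               \<or> (lex_less z x \<and> lex_less x y))"

definition T :: "(cantor \<Rightarrow> cantor) set" where
  "T = {g \<in> V. \<forall>x y z. cyc x y z \<longrightarrow> cyc (g x) (g y) (g z)}"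

definition QT :: "(word \<Rightarrow> word) set" where
  "QT = {\<tau> \<in> QV. pi \<tau> \<in> T}"

end

theory Submission
  imports Defs "HOL-Computational_Algebra.Primes"
begin

text \<open>Suppose \<open>j\<close> splits \<open>pi\<close> over \<open>T\<close>. The rotation \<open>cantor_rot m k\<close> adds \<open>k\<close> modulo \<open>2 ^ m\<close> to the
  first \<open>m\<close> digits, read as a binary number; it lies in \<open>T\<close>, \<open>cantor_rot m 1\<close> has order \<open>2 ^ m\<close>,
  and its power \<open>2 ^ (m - 1)\<close> is \<open>cantor_rot 1 1\<close>, the flip of the first digit. So the lifts
  \<open>F m = j (cantor_rot m 1)\<close> satisfy \<open>F m ^^ 2 ^ m = id\<close> and \<open>F (Suc m) ^^ 2 ^ m = F 1\<close>. Now \<open>F 1\<close>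
  flips the first letter of every long word, so it has finitely many fixed points, say \<open>c\<close>. The
  lift \<open>f = F (Suc c)\<close> permutes the \<open>2 ^ D - 1\<close> words of length \<open>< D\<close> for large \<open>D\<close>, and off the
  fixed points of \<open>f ^^ 2 ^ c = F 1\<close> all its orbits have \<open>2 ^ Suc c\<close> elements. Hence \<open>2 ^ Suc c\<close>
  divides \<open>c + 1\<close>, which is absurd.\<close>

section \<open>Binary numerals\<close>

text \<open>Most significant digit first; \<open>bits_of_nat m n\<close> is the \<open>m\<close>-digit numeral of \<open>n mod 2 ^ m\<close>.\<close>
definition nat_of_bits :: "bool list \<Rightarrow> nat" where
  "nat_of_bits xs = foldl (\<lambda>a b. 2 * a + of_bool b) 0 xs"

fun bits_of_nat :: "nat \<Rightarrow> nat \<Rightarrow> bool list" where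
  "bits_of_nat 0 n = []"
| "bits_of_nat (Suc m) n = bits_of_nat m (n div 2) @ [odd n]"

lemma nat_of_bits_Nil [simp]: "nat_of_bits [] = 0"
  by (simp add: nat_of_bits_def)

lemma nat_of_bits_snoc [simp]: "nat_of_bits (xs @ [b]) = 2 * nat_of_bits xs + of_bool b"
  by (simp add: nat_of_bits_def)

lemma nat_of_bits_Cons: "nat_of_bits (b # xs) = of_bool b * 2 ^ length xs + nat_of_bits xs"
proof (induction xs rule: rev_induct)
  case (snoc x xs)
  then show ?case
    using nat_of_bits_snoc[of "b # xs" x] by (simp add: algebra_simps)
qed (simp add: nat_of_bits_def)

lemma nat_of_bits_less: "nat_of_bits xs < 2 ^ length xs"
  by (induction xs rule: rev_induct) auto

lemma length_bits_of_nat [simp]: "length (bits_of_nat m n) = m"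
  by (induction m arbitrary: n) auto

lemma nat_of_bits_of_nat [simp]: "nat_of_bits (bits_of_nat m n) = n mod 2 ^ m"
proof (induction m arbitrary: n)
  case (Suc m)
  have "n mod (2 * 2 ^ m) = 2 * (n div 2 mod 2 ^ m) + n mod 2"
    by (rule mod_mult2_eq)
  then show ?case
    using Suc by (simp add: odd_iff_mod_2_eq_one)
qed (simp add: nat_of_bits_def)

lemma bits_of_nat_of_bits [simp]: "length xs = m \<Longrightarrow> bits_of_nat m (nat_of_bits xs) = xs"
  by (induction xs arbitrary: m rule: rev_induct) auto

lemma nat_of_bits_inject: "length xs = length ys \<Longrightarrow> nat_of_bits xs = nat_of_bits ys \<longleftrightarrow> xs = ys"
  by (metis bits_of_nat_of_bits)

lemma bits_of_nat_mod [simp]: "bits_of_nat m (n mod 2 ^ m) = bits_of_nat m n"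
  by (metis bits_of_nat_of_bits length_bits_of_nat nat_of_bits_of_nat)

lemma bits_of_nat_add_mod: "bits_of_nat m (a + b mod 2 ^ m) = bits_of_nat m (a + b)"
  by (metis bits_of_nat_mod mod_add_right_eq)

lemma bits_of_nat_Suc: "bits_of_nat (Suc m) n = odd (n div 2 ^ m) # bits_of_nat m n"
  by (induction m arbitrary: n) (simp_all add: div_mult2_eq)

section \<open>Cantor space and the map \<open>pi\<close>\<close>

definition shift :: "nat \<Rightarrow> cantor \<Rightarrow> cantor" where
  "shift n w = (\<lambda>k. w (k + n))"

lemma shift_0 [simp]: "shift 0 w = w"
  by (simp add: shift_def)

lemma shift_shift: "shift m (shift n w) = shift (m + n) w"
  by (simp add: shift_def ac_simps)

lemma length_pref [simp]: "length (pref n w) = n"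
  by (simp add: pref_def)

lemma pref_0 [simp]: "pref 0 w = []"
  by (simp add: pref_def)

lemma pref_Suc: "pref (Suc n) w = pref n w @ [w n]"
  by (simp add: pref_def)

lemma pref_Suc_Cons: "pref (Suc n) w = w 0 # pref n (shift 1 w)"
  by (rule nth_equalityI) (auto simp del: upt_Suc simp: pref_def shift_def nth_Cons split: nat.split)

lemma conc_append: "conc (p @ q) w = conc p (conc q w)"
  by (auto simp: conc_def nth_append)

lemma conc_pref_shift [simp]: "conc (pref n w) (shift n w) = w"
  by (auto simp: conc_def pref_def shift_def)

lemma pref_conc [simp]: "pref (length p) (conc p w) = p"
  by (rule nth_equalityI) (auto simp: pref_def conc_def)

lemma shift_conc [simp]: "shift (length p) (conc p w) = w"
  by (auto simp: shift_def conc_def)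

lemma pref_conc_ge: "length p \<le> n \<Longrightarrow> pref n (conc p w) = p @ pref (n - length p) w"
  by (rule nth_equalityI) (auto simp: pref_def conc_def nth_append)

lemma shift_conc_ge: "length p \<le> n \<Longrightarrow> shift n (conc p w) = shift (n - length p) w"
  by (auto simp: shift_def conc_def)

lemma pref_conc_le: "n \<le> length p \<Longrightarrow> pref n (conc p w) = take n p"
  by (rule nth_equalityI) (auto simp: pref_def conc_def)

lemma shift_conc_le: "n \<le> length p \<Longrightarrow> shift n (conc p w) = conc (drop n p) w"
  by (auto simp: shift_def conc_def add.commute)

lemma conc_eq_conc_imp_eq:
  assumes "conc p (\<lambda>_. True) = conc q (\<lambda>_. True)" and "conc p (\<lambda>_. False) = conc q (\<lambda>_. False)"
  shows "p = q"
proof -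
  have length_le: "length p \<le> length q"
    if "conc p (\<lambda>_. True) = conc q (\<lambda>_. True)" "conc p (\<lambda>_. False) = conc q (\<lambda>_. False)" for p q
    using fun_cong[OF that(1), of "length q"] fun_cong[OF that(2), of "length q"]
    by (auto simp: conc_def split: if_splits)
  have "length p = length q"
    using length_le[OF assms] length_le[OF assms[symmetric]] by simp
  moreover have "p ! i = q ! i" if "i < length p" for i
    using fun_cong[OF assms(1), of i] that \<open>length p = length q\<close> by (simp add: conc_def)
  ultimately show ?thesis
    by (rule nth_equalityI)
qed

text \<open>Although \<open>pi\<close> picks its prefix length with \<open>SOME\<close>, any prefix at which \<open>\<tau>\<close> acts by
  prefix replacement gives the same value.\<close>
lemma pi_conc:
  assumes "\<forall>s. \<tau> (p @ s) = \<tau> p @ s"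
  shows "pi \<tau> (conc p w) = conc (\<tau> p) w"
proof -
  let ?P = "\<lambda>n. \<forall>s. \<tau> (pref n (conc p w) @ s) = \<tau> (pref n (conc p w)) @ s"
  define n where "n = (SOME n. ?P n)"
  have "?P (length p)"
    using assms by simp
  then have n: "?P n"
    unfolding n_def by (rule someI)
  have pi_eq: "pi \<tau> (conc p w) = conc (\<tau> (pref n (conc p w))) (shift n (conc p w))"
    by (simp add: pi_def n_def Let_def shift_def)
  show ?thesis
  proof (cases "n \<le> length p")
    case True
    then have "p = pref n (conc p w) @ drop n p"
      by (simp add: pref_conc_le)
    then have "\<tau> p = \<tau> (pref n (conc p w)) @ drop n p"
      using n by metis
    then show ?thesis
      using True pi_eq by (simp add: pref_conc_le shift_conc_le conc_append)
  next
    case False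
    then show ?thesis
      using pi_eq assms by (simp add: pref_conc_ge shift_conc_ge conc_append)
  qed
qed

lemma QV_eventually_append:
  assumes "\<tau> \<in> QV"
  obtains N where "\<And>p s. N \<le> length p \<Longrightarrow> \<tau> (p @ s) = \<tau> p @ s"
proof -
  let ?B = "{x. \<tau> (x @ [False]) \<noteq> \<tau> x @ [False] \<or> \<tau> (x @ [True]) \<noteq> \<tau> x @ [True]}"
  have "finite (length ` ?B)"
    using assms by (simp add: QV_def)
  then obtain N where "\<forall>k \<in> length ` ?B. k < N"
    by (auto simp: finite_nat_set_iff_bounded)
  then have N: "\<And>x. x \<in> ?B \<Longrightarrow> length x < N"
    by blast
  have "\<tau> (p @ s) = \<tau> p @ s" if "N \<le> length p" for p s
  proof (induction s rule: rev_induct)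
    case (snoc b s)
    have "p @ s \<notin> ?B"
      using N[of "p @ s"] that by auto
    then have "\<tau> ((p @ s) @ [b]) = \<tau> (p @ s) @ [b]"
      by (cases b) auto
    then show ?case
      using snoc by simp
  qed simp
  then show ?thesis
    using that by blast
qed

lemma QV_eventually_eq_if_pi_eq:
  assumes "\<tau> \<in> QV" "\<sigma> \<in> QV" "pi \<tau> = pi \<sigma>"
  obtains N where "\<And>p. N \<le> length p \<Longrightarrow> \<tau> p = \<sigma> p"
proof -
  obtain N1 where N1: "\<And>p s. N1 \<le> length p \<Longrightarrow> \<tau> (p @ s) = \<tau> p @ s"
    using QV_eventually_append[OF assms(1)] by blast
  obtain N2 where N2: "\<And>p s. N2 \<le> length p \<Longrightarrow> \<sigma> (p @ s) = \<sigma> p @ s"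
    using QV_eventually_append[OF assms(2)] by blast
  have "\<tau> p = \<sigma> p" if "max N1 N2 \<le> length p" for p
  proof -
    have "conc (\<tau> p) w = conc (\<sigma> p) w" for w
      using pi_conc[of \<tau> p w] pi_conc[of \<sigma> p w] N1[of p] N2[of p] that assms(3) by simp
    then show ?thesis
      by (intro conc_eq_conc_imp_eq)
  qed
  then show ?thesis
    using that by blast
qed

lemma finite_short_words: "finite {p :: word. length p < n}"
  using finite_lists_length_le[of "UNIV :: bool set" n] by (rule finite_subset[rotated]) auto

lemma finite_fixpoints_if_pi_fixpoint_free:
  assumes "\<tau> \<in> QV" "\<And>w. pi \<tau> w \<noteq> w"
  shows "finite {p. \<tau> p = p}"
proof -
  obtain N where N: "\<And>p s. N \<le> length p \<Longrightarrow> \<tau> (p @ s) = \<tau> p @ s"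
    using QV_eventually_append[OF assms(1)] by blast
  have "length p < N" if "\<tau> p = p" for p
  proof (rule ccontr)
    assume "\<not> length p < N"
    then have "pi \<tau> (conc p (\<lambda>_. True)) = conc p (\<lambda>_. True)"
      using pi_conc[of \<tau> p] N[of p] that by simp
    then show False
      using assms(2) by blast
  qed
  then have "{p. \<tau> p = p} \<subseteq> {p. length p < N}"
    by blast
  then show ?thesis
    using finite_short_words by (rule finite_subset)
qed

section \<open>Dyadic rotations\<close>

definition word_rot :: "nat \<Rightarrow> nat \<Rightarrow> word \<Rightarrow> word" where
  "word_rot m k p =
     (if length p < m then p else bits_of_nat m (nat_of_bits (take m p) + k) @ drop m p)"

definition cantor_rot :: "nat \<Rightarrow> nat \<Rightarrow> cantor \<Rightarrow> cantor" where
  "cantor_rot m k w = conc (word_rot m k (pref m w)) (shift m w)"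

lemma length_word_rot [simp]: "length (word_rot m k p) = length p"
  by (simp add: word_rot_def)

lemma word_rot_append: "m \<le> length p \<Longrightarrow> word_rot m k (p @ s) = word_rot m k p @ s"
  by (simp add: word_rot_def)

lemma word_rot_word_rot: "word_rot m a (word_rot m b p) = word_rot m (a + b) p"
  by (simp add: word_rot_def bits_of_nat_add_mod ac_simps)

lemma word_rot_mod: "word_rot m (k mod 2 ^ m) = word_rot m k"
  by (rule ext) (simp add: word_rot_def bits_of_nat_add_mod)

lemma word_rot_0: "word_rot m 0 = id"
  by (rule ext) (simp add: word_rot_def)

lemma word_rot_in_QV: "word_rot m k \<in> QV"
proof -
  have inverse: "word_rot m a \<circ> word_rot m b = id" if "a + b = 2 ^ m * k" for a b
    using word_rot_mod[of m "a + b"] that by (auto simp: word_rot_word_rot word_rot_0)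
  have "bij (word_rot m k)"
    by (rule o_bij[of "word_rot m ((2 ^ m - 1) * k)"]) (auto intro: inverse simp: algebra_simps)
  moreover have "{x. word_rot m k (x @ [False]) \<noteq> word_rot m k x @ [False] \<or>
      word_rot m k (x @ [True]) \<noteq> word_rot m k x @ [True]} \<subseteq> {x. length x < m}"
    using word_rot_append[of m _ k] by (auto simp: not_less[symmetric])
  ultimately show ?thesis
    unfolding QV_def using finite_short_words by (auto intro: finite_subset)
qed

lemma pi_word_rot: "pi (word_rot m k) = cantor_rot m k"
proof
  fix w
  have "pi (word_rot m k) (conc (pref m w) (shift m w)) = conc (word_rot m k (pref m w)) (shift m w)"
    by (rule pi_conc) (simp add: word_rot_append)
  then show "pi (word_rot m k) w = cantor_rot m k w"
    by (simp add: cantor_rot_def)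
qed

lemma pref_cantor_rot [simp]: "pref m (cantor_rot m k w) = word_rot m k (pref m w)"
  by (metis cantor_rot_def length_pref length_word_rot pref_conc)

lemma shift_cantor_rot [simp]: "shift m (cantor_rot m k w) = shift m w"
  by (metis cantor_rot_def length_pref length_word_rot shift_conc)

lemma cantor_rot_cantor_rot: "cantor_rot m a (cantor_rot m b w) = cantor_rot m (a + b) w"
  by (simp add: cantor_rot_def[of m a "cantor_rot m b w"] word_rot_word_rot) (simp add: cantor_rot_def)

lemma cantor_rot_mod: "cantor_rot m (k mod 2 ^ m) = cantor_rot m k"
  by (simp add: fun_eq_iff cantor_rot_def word_rot_mod)

lemma cantor_rot_0: "cantor_rot m 0 = id"
  by (rule ext) (simp add: cantor_rot_def word_rot_0)

lemma cantor_rot_full_turn: "cantor_rot m (2 ^ m) = id"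
  using cantor_rot_mod[of m "2 ^ m"] by (simp add: cantor_rot_0)

lemma funpow_cantor_rot: "cantor_rot m 1 ^^ k = cantor_rot m k"
  by (induction k) (auto simp: cantor_rot_0 cantor_rot_cantor_rot)

lemma word_rot_half_turn:
  assumes "length p = m"
  shows "word_rot (Suc m) (2 ^ m) (b # p) = (\<not> b) # p"
proof -
  define n where "n = nat_of_bits p + (of_bool b + 1) * 2 ^ m"
  have "nat_of_bits p < 2 ^ m"
    using nat_of_bits_less[of p] assms by simp
  moreover have "n div 2 ^ m = of_bool b + 1 + nat_of_bits p div 2 ^ m"
    unfolding n_def by (rule div_mult_self1) simp
  moreover have "n mod 2 ^ m = nat_of_bits p mod 2 ^ m"
    unfolding n_def by (rule mod_mult_self1)
  ultimately have "n div 2 ^ m = of_bool b + 1" and "n mod 2 ^ m = nat_of_bits p"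
    by simp_all
  moreover have "bits_of_nat m n = p"
    using bits_of_nat_mod[of m n] assms \<open>n mod 2 ^ m = nat_of_bits p\<close> by simp
  ultimately have "bits_of_nat (Suc m) n = (\<not> b) # p"
    by (simp only: bits_of_nat_Suc) simp
  moreover have "nat_of_bits (b # p) + 2 ^ m = n"
    using assms by (simp add: n_def nat_of_bits_Cons)
  ultimately show ?thesis
    using assms by (simp add: word_rot_def)
qed

lemma cantor_rot_1_1: "cantor_rot 1 1 w = conc [\<not> w 0] (shift 1 w)"
  using word_rot_half_turn[of "[]" 0 "w 0"] by (simp add: cantor_rot_def pref_Suc_Cons)

lemma cantor_rot_half_turn: "cantor_rot (Suc m) (2 ^ m) = cantor_rot 1 1"
proof
  fix w
  have "cantor_rot (Suc m) (2 ^ m) w = conc ((\<not> w 0) # pref m (shift 1 w)) (shift m (shift 1 w))"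
    by (simp add: cantor_rot_def pref_Suc_Cons word_rot_half_turn shift_shift)
  also have "\<dots> = conc [\<not> w 0] (shift 1 w)"
    using conc_append[of "[\<not> w 0]" "pref m (shift 1 w)"] by simp
  finally show "cantor_rot (Suc m) (2 ^ m) w = cantor_rot 1 1 w"
    unfolding cantor_rot_1_1 .
qed

lemma cantor_rot_1_1_neq: "cantor_rot 1 1 w \<noteq> w"
proof -
  have "conc [\<not> w 0] (shift 1 w) 0 \<noteq> w 0"
    by (simp add: conc_def)
  then show ?thesis
    unfolding cantor_rot_1_1 by auto
qed

section \<open>Rotations preserve the cyclic order\<close>

lemma lex_less_trans:
  assumes "lex_less x y" "lex_less y z"
  shows "lex_less x z"
proof -
  obtain n1 where n1: "\<forall>k<n1. x k = y k" "\<not> x n1" "y n1"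
    using assms(1) by (auto simp: lex_less_def)
  obtain n2 where n2: "\<forall>k<n2. y k = z k" "\<not> y n2" "z n2"
    using assms(2) by (auto simp: lex_less_def)
  have "n1 \<noteq> n2"
    using n1 n2 by auto
  then show ?thesis
    unfolding lex_less_def using n1 n2
    by (cases "n1 < n2") (auto intro!: exI[of _ "min n1 n2"])
qed

lemma lex_less_asym: "lex_less x y \<Longrightarrow> \<not> lex_less y x"
proof
  assume "lex_less x y" "lex_less y x"
  then obtain n1 n2 where "\<forall>k<n1. x k = y k" "\<not> x n1" "y n1" "\<forall>k<n2. y k = x k" "\<not> y n2" "x n2"
    by (auto simp: lex_less_def)
  then show False
    by (cases n1 n2 rule: linorder_cases) auto
qed

lemma lex_less_iff_head:
  "lex_less x y \<longleftrightarrow> (\<not> x 0 \<and> y 0) \<or> (x 0 = y 0 \<and> lex_less (shift 1 x) (shift 1 y))"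
proof
  assume "lex_less x y"
  then obtain n where n: "\<forall>k<n. x k = y k" "\<not> x n" "y n"
    by (auto simp: lex_less_def)
  show "(\<not> x 0 \<and> y 0) \<or> (x 0 = y 0 \<and> lex_less (shift 1 x) (shift 1 y))"
  proof (cases n)
    case (Suc n')
    then have "lex_less (shift 1 x) (shift 1 y)"
      using n unfolding lex_less_def shift_def by (intro exI[of _ n']) auto
    then show ?thesis
      using n Suc by auto
  qed (use n in auto)
next
  assume "(\<not> x 0 \<and> y 0) \<or> (x 0 = y 0 \<and> lex_less (shift 1 x) (shift 1 y))"
  then show "lex_less x y"
  proof
    assume "\<not> x 0 \<and> y 0"
    then show ?thesis
      unfolding lex_less_def by (intro exI[of _ 0]) auto
  next
    assume head: "x 0 = y 0 \<and> lex_less (shift 1 x) (shift 1 y)"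
    then obtain n where n: "\<forall>k<n. x (Suc k) = y (Suc k)" "\<not> x (Suc n)" "y (Suc n)"
      by (auto simp: lex_less_def shift_def)
    have "\<forall>k<Suc n. x k = y k"
      using head n by (auto simp: less_Suc_eq_0_disj)
    then show ?thesis
      unfolding lex_less_def using n by (intro exI[of _ "Suc n"]) auto
  qed
qed

lemma lex_less_iff_pref:
  "lex_less x y \<longleftrightarrow> nat_of_bits (pref m x) < nat_of_bits (pref m y)
     \<or> (pref m x = pref m y \<and> lex_less (shift m x) (shift m y))"
proof (induction m)
  case (Suc m)
  have step: "(2 * a + of_bool b < 2 * c + of_bool d) \<longleftrightarrow> a < c \<or> (a = c \<and> \<not> b \<and> d)" for a c :: nat and b d
    by (cases b; cases d) auto
  have "pref m x = pref m y \<longleftrightarrow> nat_of_bits (pref m x) = nat_of_bits (pref m y)"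
    by (simp add: nat_of_bits_inject)
  then show ?case
    unfolding Suc pref_Suc nat_of_bits_snoc step lex_less_iff_head[of "shift m x"]
    by (auto simp: shift_shift shift_def)
qed simp

lemma cyc_preserved_by_arc_exchange:
  assumes below: "\<And>x y. x \<in> A \<Longrightarrow> y \<notin> A \<Longrightarrow> lex_less x y"
    and exchange: "\<And>x y. x \<in> A \<Longrightarrow> y \<notin> A \<Longrightarrow> lex_less (g y) (g x)"
    and mono: "\<And>x y. lex_less x y \<Longrightarrow> (x \<in> A \<longleftrightarrow> y \<in> A) \<Longrightarrow> lex_less (g x) (g y)"
    and "cyc x y z"
  shows "cyc (g x) (g y) (g z)"
proof -
  have "cyc (g u) (g v) (g w)" if uv: "lex_less u v" and vw: "lex_less v w" for u v w
  proof -
    have "u \<in> A \<or> v \<notin> A" "v \<in> A \<or> w \<notin> A"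
      using below uv vw lex_less_asym by blast+
    then show ?thesis
      using mono[OF uv] mono[OF vw] exchange[of u w] exchange[of v w] exchange[of u v]
        lex_less_trans[OF uv vw]
      unfolding cyc_def by blast
  qed
  then show ?thesis
    using \<open>cyc x y z\<close> unfolding cyc_def by blast
qed

lemma nat_of_bits_word_rot:
  "length p = m \<Longrightarrow> nat_of_bits (word_rot m k p) = (nat_of_bits p + k) mod 2 ^ m"
  by (simp add: word_rot_def)

lemma cantor_rot_preserves_cyc:
  assumes "cyc x y z"
  shows "cyc (cantor_rot m k x) (cantor_rot m k y) (cantor_rot m k z)"
proof -
  define k' where "k' = k mod 2 ^ m"
  let ?v = "\<lambda>w. nat_of_bits (pref m w)"
  define A where "A = {w. ?v w + k' < 2 ^ m}"
  have "k' < 2 ^ m"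
    by (simp add: k'_def)
  have v_less: "?v w < 2 ^ m" for w
    using nat_of_bits_less[of "pref m w"] by simp
  have rot_value: "?v (cantor_rot m k' w) = (if w \<in> A then ?v w + k' else ?v w + k' - 2 ^ m)" for w
    using v_less[of w] \<open>k' < 2 ^ m\<close> by (auto simp: nat_of_bits_word_rot A_def le_mod_geq)
  have lex_by_value: "?v a < ?v b \<Longrightarrow> lex_less a b" for a b
    using lex_less_iff_pref[of a b m] by blast
  have "cyc (cantor_rot m k' x) (cantor_rot m k' y) (cantor_rot m k' z)"
  proof (rule cyc_preserved_by_arc_exchange[where A = A, OF _ _ _ assms])
    fix a b
    assume "a \<in> A" "b \<notin> A"
    then show "lex_less a b"
      by (intro lex_by_value) (simp add: A_def)
    show "lex_less (cantor_rot m k' b) (cantor_rot m k' a)"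
      using rot_value[of a] rot_value[of b] \<open>a \<in> A\<close> \<open>b \<notin> A\<close> v_less[of b]
      by (intro lex_by_value) (simp add: A_def)
  next
    fix a b
    assume "lex_less a b" "a \<in> A \<longleftrightarrow> b \<in> A"
    consider "?v a < ?v b" | "pref m a = pref m b" "lex_less (shift m a) (shift m b)"
      using \<open>lex_less a b\<close> lex_less_iff_pref[of a b m] by blast
    then show "lex_less (cantor_rot m k' a) (cantor_rot m k' b)"
    proof cases
      case 1
      then show ?thesis
        using rot_value[of a] rot_value[of b] \<open>a \<in> A \<longleftrightarrow> b \<in> A\<close>
        by (intro lex_by_value) (auto simp: A_def)
    next
      case 2
      then show ?thesis
        using lex_less_iff_pref[of "cantor_rot m k' a" "cantor_rot m k' b" m] by simp
    qed
  qed
  then show ?thesis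
    by (simp add: k'_def cantor_rot_mod)
qed

lemma cantor_rot_in_T: "cantor_rot m k \<in> T"
proof -
  have "cantor_rot m k \<in> V"
    unfolding V_def using pi_word_rot word_rot_in_QV by (metis image_eqI)
  then show ?thesis
    unfolding T_def using cantor_rot_preserves_cyc by blast
qed

section \<open>Orbits of maps of prime power order\<close>

lemma funpow_gcd_fixpoint: "(f ^^ a) x = x \<Longrightarrow> (f ^^ b) x = x \<Longrightarrow> (f ^^ gcd a b) x = x"
proof (induction a b rule: gcd_nat_induct)
  case (step a b)
  then show ?case
    using funpow_mod_eq[where f = f and n = b and x = x and m = a] by (simp add: gcd_red_nat[of a b])
qed simp

lemma funpow_mult_fixpoint: "(f ^^ a) x = x \<Longrightarrow> (f ^^ (a * n)) x = x"
  using funpow_mod_eq[where f = f and n = a and x = x and m = "a * n"] by simp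

lemma prime_power_period:
  fixes p :: nat
  assumes "prime p" "(f ^^ p ^ m) x = x" "(f ^^ d) x = x" "0 < d" "d < p ^ m"
  shows "(f ^^ p ^ (m - 1)) x = x"
proof -
  obtain e where "e \<le> m" and e: "gcd d (p ^ m) = p ^ e"
    using divides_primepow_nat[OF assms(1)] by (metis gcd_dvd2)
  have "p ^ e < p ^ m"
    using e assms(4,5) gcd_le1_nat[of d "p ^ m"] by simp
  then have "e \<le> m - 1"
    using power_strict_increasing_iff[of p e m] prime_gt_1_nat[OF assms(1)] by simp
  then obtain n where "p ^ (m - 1) = p ^ e * n"
    by (metis le_imp_power_dvd dvdE)
  moreover have "(f ^^ p ^ e) x = x"
    using funpow_gcd_fixpoint[OF assms(3,2)] e by simp
  ultimately show ?thesis
    by (simp add: funpow_mult_fixpoint)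
qed

definition forward_orbit :: "('a \<Rightarrow> 'a) \<Rightarrow> 'a \<Rightarrow> 'a set" where
  "forward_orbit f x = range (\<lambda>n. (f ^^ n) x)"

lemma self_in_forward_orbit: "x \<in> forward_orbit f x"
  unfolding forward_orbit_def using rangeI[of "\<lambda>n. (f ^^ n) x" 0] by simp

lemma forward_orbit_subset: "f ` G \<subseteq> G \<Longrightarrow> x \<in> G \<Longrightarrow> forward_orbit f x \<subseteq> G"
proof -
  assume "f ` G \<subseteq> G" "x \<in> G"
  then have "(f ^^ n) x \<in> G" for n
    by (induction n) auto
  then show ?thesis
    by (auto simp: forward_orbit_def)
qed

lemma forward_orbit_mono: "y \<in> forward_orbit f x \<Longrightarrow> forward_orbit f y \<subseteq> forward_orbit f x"
proof
  fix z
  assume "y \<in> forward_orbit f x" "z \<in> forward_orbit f y"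
  then obtain a b where "y = (f ^^ a) x" "z = (f ^^ b) y"
    unfolding forward_orbit_def by blast
  then have "z = (f ^^ (b + a)) x"
    by (simp add: funpow_add)
  then show "z \<in> forward_orbit f x"
    unfolding forward_orbit_def by blast
qed

lemma forward_orbit_eq:
  assumes period: "f ^^ n = id" "0 < n" and "y \<in> forward_orbit f x"
  shows "forward_orbit f y = forward_orbit f x"
proof
  show "forward_orbit f y \<subseteq> forward_orbit f x"
    using assms(3) by (rule forward_orbit_mono)
  obtain a where y: "y = (f ^^ a) x"
    using assms(3) unfolding forward_orbit_def by blast
  have "(f ^^ (n * Suc a - a)) y = (f ^^ (n * Suc a - a + a)) x"
    by (simp add: y funpow_add)
  also have "n * Suc a - a + a = n * Suc a"
    using \<open>0 < n\<close> by (cases n) auto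
  also have "(f ^^ (n * Suc a)) x = x"
    by (rule funpow_mult_fixpoint) (simp add: period)
  finally have "x \<in> forward_orbit f y"
    unfolding forward_orbit_def by (metis rangeI)
  then show "forward_orbit f x \<subseteq> forward_orbit f y"
    by (rule forward_orbit_mono)
qed

lemma card_forward_orbit:
  fixes p :: nat
  assumes "prime p" and period: "f ^^ p ^ m = id" and "(f ^^ p ^ (m - 1)) x \<noteq> x"
  shows "card (forward_orbit f x) = p ^ m"
proof -
  have "0 < p ^ m"
    using prime_gt_0_nat[OF assms(1)] by simp
  have "(f ^^ n) x \<in> (\<lambda>n. (f ^^ n) x) ` {..<p ^ m}" for n
  proof
    show "(f ^^ n) x = (f ^^ (n mod p ^ m)) x"
      using funpow_mod_eq[where f = f and n = "p ^ m" and x = x] period by simp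
    show "n mod p ^ m \<in> {..<p ^ m}"
      using \<open>0 < p ^ m\<close> by simp
  qed
  then have "forward_orbit f x = (\<lambda>n. (f ^^ n) x) ` {..<p ^ m}"
    unfolding forward_orbit_def by auto
  moreover have "inj_on (\<lambda>n. (f ^^ n) x) {..<p ^ m}"
  proof (rule linorder_inj_onI')
    fix i j
    assume "i \<in> {..<p ^ m}" "j \<in> {..<p ^ m}" "i < j"
    show "(f ^^ i) x \<noteq> (f ^^ j) x"
    proof
      assume "(f ^^ i) x = (f ^^ j) x"
      then have "(f ^^ (p ^ m - j)) ((f ^^ i) x) = (f ^^ (p ^ m - j)) ((f ^^ j) x)"
        by simp
      then have "(f ^^ (p ^ m - j + i)) x = (f ^^ (p ^ m - j + j)) x"
        by (simp only: funpow_add comp_apply)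
      also have "\<dots> = x"
        using \<open>j \<in> {..<p ^ m}\<close> period by simp
      finally have d_period: "(f ^^ (p ^ m - j + i)) x = x" .
      have d_pos: "0 < p ^ m - j + i" and d_less: "p ^ m - j + i < p ^ m"
        using \<open>i < j\<close> \<open>j \<in> {..<p ^ m}\<close> by auto
      have "(f ^^ p ^ m) x = x"
        using period by simp
      from assms(3) prime_power_period[OF assms(1) this d_period d_pos d_less]
      show False ..
    qed
  qed
  ultimately show ?thesis
    by (simp add: card_image)
qed

lemma prime_power_dvd_card:
  fixes p :: nat
  assumes "prime p" and period: "f ^^ p ^ m = id" and "finite G" "f ` G \<subseteq> G"
    and no_short_period: "\<And>x. x \<in> G \<Longrightarrow> (f ^^ p ^ (m - 1)) x \<noteq> x"
  shows "p ^ m dvd card G"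
proof -
  have "0 < p ^ m"
    using prime_gt_0_nat[OF assms(1)] by simp
  have orbits_cover: "\<Union> (forward_orbit f ` G) = G"
  proof
    show "\<Union> (forward_orbit f ` G) \<subseteq> G"
      by (rule UN_least) (rule forward_orbit_subset[OF \<open>f ` G \<subseteq> G\<close>])
    show "G \<subseteq> \<Union> (forward_orbit f ` G)"
    proof
      fix x
      assume "x \<in> G"
      then show "x \<in> \<Union> (forward_orbit f ` G)"
        using self_in_forward_orbit by (rule UN_I)
    qed
  qed
  have "p ^ m * card (forward_orbit f ` G) = card (\<Union> (forward_orbit f ` G))"
  proof (rule card_partition)
    show "finite (forward_orbit f ` G)" "finite (\<Union> (forward_orbit f ` G))"
      using \<open>finite G\<close> orbits_cover by simp_all
    show "card c = p ^ m" if c_in: "c \<in> forward_orbit f ` G" for c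
    proof -
      obtain x where "x \<in> G" "c = forward_orbit f x"
        using c_in by blast
      then show ?thesis
        using card_forward_orbit[OF assms(1) period no_short_period[OF \<open>x \<in> G\<close>]] by simp
    qed
    show "c1 \<inter> c2 = {}"
      if orbits: "c1 \<in> forward_orbit f ` G" "c2 \<in> forward_orbit f ` G" and "c1 \<noteq> c2" for c1 c2
    proof (rule ccontr)
      assume "c1 \<inter> c2 \<noteq> {}"
      then obtain z where "z \<in> c1" "z \<in> c2"
        by blast
      obtain x y where "c1 = forward_orbit f x" "c2 = forward_orbit f y"
        using orbits by blast
      then have "c1 = forward_orbit f z" "c2 = forward_orbit f z"
        using \<open>z \<in> c1\<close> \<open>z \<in> c2\<close> forward_orbit_eq[OF period \<open>0 < p ^ m\<close>, of z x]
          forward_orbit_eq[OF period \<open>0 < p ^ m\<close>, of z y]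
        by simp_all
      then show False
        using \<open>c1 \<noteq> c2\<close> by simp
    qed
  qed
  then show ?thesis
    unfolding orbits_cover by (rule dvdI[OF sym])
qed

section \<open>No compatible lifts of the rotations\<close>

lemma card_short_words: "card {p :: word. length p < n} + 1 = 2 ^ n"
proof (cases n)
  case (Suc k)
  have "{p :: word. length p < n} = {p. set p \<subseteq> UNIV \<and> length p \<le> k}"
    by (auto simp: Suc)
  then show ?thesis
    using card_lists_length_le[of "UNIV :: bool set" k] sum_power2[of n]
    by (simp add: Suc atLeast0LessThan lessThan_Suc_atMost)
qed simp

lemma two_pow_dvd_card_fixpoints_add_one:
  fixes f :: "word \<Rightarrow> word"
  assumes period: "f ^^ 2 ^ Suc m = id"
    and finite_fix: "finite {p. (f ^^ 2 ^ m) p = p}"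
    and inverse_length: "\<And>p. N \<le> length p \<Longrightarrow> length ((f ^^ (2 ^ Suc m - 1)) p) = length p"
  shows "2 ^ Suc m dvd card {p. (f ^^ 2 ^ m) p = p} + 1"
proof -
  let ?h = "f ^^ 2 ^ m"
  let ?Fix = "{p. ?h p = p}"
  obtain L where L: "\<And>p. p \<in> ?Fix \<Longrightarrow> length p < L"
    using finite_fix finite_nat_set_iff_bounded[of "length ` ?Fix"] by auto
  define D where "D = max (max N (Suc m)) L"
  define S where "S = {p :: word. length p < D}"
  have inverse: "(f ^^ (2 ^ Suc m - 1)) (f p) = p" for p
    using period funpow_Suc_right[of "2 ^ Suc m - 1" f] by (simp add: fun_eq_iff)
  have f_S: "f ` S \<subseteq> S"
  proof (rule image_subsetI, rule ccontr)
    fix p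
    assume "p \<in> S" "f p \<notin> S"
    then have "length ((f ^^ (2 ^ Suc m - 1)) (f p)) = length (f p)"
      by (intro inverse_length) (simp add: S_def D_def)
    then show False
      using \<open>p \<in> S\<close> \<open>f p \<notin> S\<close> inverse[of p] by (simp add: S_def)
  qed
  have "?Fix \<subseteq> S"
  proof
    fix p
    assume "p \<in> ?Fix"
    then have "length p < L"
      by (rule L)
    then show "p \<in> S"
      by (simp add: S_def D_def)
  qed
  have "f ` (S - ?Fix) \<subseteq> S - ?Fix"
  proof (intro image_subsetI DiffI)
    fix p
    assume "p \<in> S - ?Fix"
    then show "f p \<in> S"
      using f_S by blast
    have "?h (f p) = f (?h p)"
      by (simp add: funpow_swap1)
    then show "f p \<notin> ?Fix"
      using \<open>p \<in> S - ?Fix\<close> inverse[of p] inverse[of "?h p"] by auto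
  qed
  then have "2 ^ Suc m dvd card (S - ?Fix)"
    using finite_short_words
    by (intro prime_power_dvd_card[OF two_is_prime_nat period]) (auto simp: S_def)
  moreover have card_S: "card (S - ?Fix) + card ?Fix + 1 = 2 ^ D"
  proof -
    have "card ?Fix \<le> card S"
      using finite_short_words \<open>?Fix \<subseteq> S\<close> by (simp add: S_def card_mono)
    then show ?thesis
      using card_Diff_subset[OF finite_fix \<open>?Fix \<subseteq> S\<close>] card_short_words[of D]
      by (simp add: S_def)
  qed
  moreover have "(2 :: nat) ^ Suc m dvd 2 ^ D"
    by (simp add: D_def le_imp_power_dvd del: power_Suc)
  ultimately have "2 ^ Suc m dvd 2 ^ D - card (S - ?Fix)"
    by (simp add: dvd_diff_nat del: power_Suc)
  also have "2 ^ D - card (S - ?Fix) = card ?Fix + 1"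
    using card_S by simp
  finally show ?thesis .
qed

lemma QV_length_eventually_eq_if_pi_cantor_rot:
  assumes "\<tau> \<in> QV" "pi \<tau> = cantor_rot m k"
  obtains N where "\<And>p. N \<le> length p \<Longrightarrow> length (\<tau> p) = length p"
proof -
  obtain N where eq: "\<And>p. N \<le> length p \<Longrightarrow> \<tau> p = word_rot m k p"
    using QV_eventually_eq_if_pi_eq[OF assms(1) word_rot_in_QV] assms(2) pi_word_rot by metis
  show ?thesis
    by (rule that[of N]) (simp add: eq)
qed

lemma no_compatible_lifts_of_rotations:
  "\<nexists>F :: nat \<Rightarrow> word \<Rightarrow> word.
     (\<forall>m k. F m ^^ k \<in> QV \<and> pi (F m ^^ k) = cantor_rot m k) \<and>
     (\<forall>m. F m ^^ 2 ^ m = id) \<and> (\<forall>m. F (Suc m) ^^ 2 ^ m = F 1)"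
proof
  assume "\<exists>F :: nat \<Rightarrow> word \<Rightarrow> word.
     (\<forall>m k. F m ^^ k \<in> QV \<and> pi (F m ^^ k) = cantor_rot m k) \<and>
     (\<forall>m. F m ^^ 2 ^ m = id) \<and> (\<forall>m. F (Suc m) ^^ 2 ^ m = F 1)"
  then obtain F :: "nat \<Rightarrow> word \<Rightarrow> word"
    where lift: "\<And>m k. F m ^^ k \<in> QV" "\<And>m k. pi (F m ^^ k) = cantor_rot m k"
      and period: "\<And>m. F m ^^ 2 ^ m = id" and half_turn: "\<And>m. F (Suc m) ^^ 2 ^ m = F 1"
    by blast
  have "finite {p. F 1 p = p}"
    using lift[of 1 1] cantor_rot_1_1_neq by (intro finite_fixpoints_if_pi_fixpoint_free) simp_all
  define c where "c = card {p. F 1 p = p}"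
  obtain N where inverse_length:
    "\<And>p. N \<le> length p \<Longrightarrow> length ((F (Suc c) ^^ (2 ^ Suc c - 1)) p) = length p"
    using QV_length_eventually_eq_if_pi_cantor_rot[OF lift] by blast
  have "2 ^ Suc c dvd c + 1"
    using two_pow_dvd_card_fixpoints_add_one[OF period[of "Suc c"], unfolded half_turn,
        OF \<open>finite {p. F 1 p = p}\<close> inverse_length]
    by (simp add: c_def)
  then show False
    using dvd_imp_le[of "2 ^ Suc c" "c + 1"] less_exp[of "Suc c"] by simp
qed

lemma hom_funpow:
  assumes hom: "\<And>g h. g \<in> M \<Longrightarrow> h \<in> M \<Longrightarrow> j (g \<circ> h) = j g \<circ> j h"
    and "id \<in> M" "inj (j id)" "\<And>n. g ^^ n \<in> M"
  shows "j (g ^^ n) = j g ^^ n"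
proof -
  have "j id = id"
  proof
    fix x
    have "j id (j id x) = j id x"
      using hom[OF \<open>id \<in> M\<close> \<open>id \<in> M\<close>] by (simp add: fun_eq_iff)
    then show "j id x = id x"
      using \<open>inj (j id)\<close> by (simp add: inj_eq)
  qed
  show ?thesis
  proof (induction n)
    case (Suc n)
    have "j (g ^^ Suc n) = j (g \<circ> g ^^ n)"
      by simp
    also have "\<dots> = j g \<circ> j (g ^^ n)"
      using hom assms(4)[of 1] assms(4)[of n] by simp
    finally show ?case
      by (simp only: Suc funpow.simps(2))
  qed (simp only: funpow.simps(1) \<open>j id = id\<close>)
qed

theorem proposition2p10:
  shows "\<not> (\<exists>j :: (cantor \<Rightarrow> cantor) \<Rightarrow> (word \<Rightarrow> word).
            (\<forall>g\<in>T. j g \<in> QT) \<and>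
            (\<forall>g\<in>T. \<forall>h\<in>T. j (g \<circ> h) = j g \<circ> j h) \<and>
            (\<forall>g\<in>T. pi (j g) = g))"
proof (intro notI, elim exE conjE)
  fix j :: "(cantor \<Rightarrow> cantor) \<Rightarrow> (word \<Rightarrow> word)"
  assume lift_QT: "\<forall>g\<in>T. j g \<in> QT" and hom: "\<forall>g\<in>T. \<forall>h\<in>T. j (g \<circ> h) = j g \<circ> j h"
    and pi_j: "\<forall>g\<in>T. pi (j g) = g"
  have lift: "j (cantor_rot m k) \<in> QV" "pi (j (cantor_rot m k)) = cantor_rot m k" for m k
    using lift_QT pi_j cantor_rot_in_T by (auto simp: QT_def)
  have "id \<in> T" "inj (j id)"
    using cantor_rot_in_T[of 0 0] lift(1)[of 0 0] by (simp_all add: cantor_rot_0 QV_def bij_is_inj)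
  have "j (cantor_rot m 1 ^^ k) = j (cantor_rot m 1) ^^ k" for m k
    by (rule hom_funpow[where M = T])
      (simp_all only: hom \<open>id \<in> T\<close> \<open>inj (j id)\<close> funpow_cantor_rot cantor_rot_in_T)
  then have powers: "j (cantor_rot m 1) ^^ k = j (cantor_rot m k)" for m k
    unfolding funpow_cantor_rot by (rule sym)
  have "j id = id"
    using powers[of 0 0] by (simp add: cantor_rot_0)
  have "\<exists>F :: nat \<Rightarrow> word \<Rightarrow> word.
     (\<forall>m k. F m ^^ k \<in> QV \<and> pi (F m ^^ k) = cantor_rot m k) \<and>
     (\<forall>m. F m ^^ 2 ^ m = id) \<and> (\<forall>m. F (Suc m) ^^ 2 ^ m = F 1)"
  proof (rule exI[where x = "\<lambda>m. j (cantor_rot m 1)"], intro conjI allI)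
    show "j (cantor_rot m 1) ^^ k \<in> QV" "pi (j (cantor_rot m 1) ^^ k) = cantor_rot m k" for m k
      unfolding powers by (rule lift(1), rule lift(2))
    show "j (cantor_rot m 1) ^^ 2 ^ m = id" for m
      unfolding powers cantor_rot_full_turn by fact
    show "j (cantor_rot (Suc m) 1) ^^ 2 ^ m = j (cantor_rot 1 1)" for m
      unfolding powers cantor_rot_half_turn ..
  qed
  with no_compatible_lifts_of_rotations show False
    by blast
qed

end
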